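(* If $L$ is a regular language, then ${\rm bdi}(L)$ is regular.
   Context: For a word $w=a_1\cdots a_n$, ${\rm fh}(w)=a_1\cdots a_{\lfloor n/2\rfloor}$ and ${\rm lh}(w)=a_{\lfloor n/2\rfloor+1}\cdots a_n$. For words $x=a_1\cdots a_m$ and $y=b_1\cdots b_m$ the perfect shuffle is $x\,\text{sh}\,y=a_1b_1\cdots a_mb_m$, and if $y=b_1\cdots b_{m+1}$ has length $m+1$ then $x\,\text{sh}\,y=a_1b_1\cdots a_mb_mb_{m+1}$. ${\rm bdi}(w)={\rm fh}(w)\,\text{sh}\,{\rm lh}(w)$ and ${\rm bdi}(L)=\{{\rm bdi}(w):w\in L\}$. *)

theory Defs
  imports Main
begin

definition regular :: "'a list set \<Rightarrow> bool" where
  "regular L \<longleftrightarrow>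
     (\<exists>(\<Sigma>::'a set) (Q::nat set) (\<delta>::nat \<Rightarrow> 'a \<Rightarrow> nat) q0 F.
        finite \<Sigma> \<and> finite Q \<and> q0 \<in> Q \<and> F \<subseteq> Q \<and>
        (\<forall>q\<in>Q. \<forall>a\<in>\<Sigma>. \<delta> q a \<in> Q) \<and>
        L = {w. w \<in> lists \<Sigma> \<and> foldl \<delta> q0 w \<in> F})"

definition fh :: "'a list \<Rightarrow> 'a list" where
  "fh w = take (length w div 2) w"

definition lh :: "'a list \<Rightarrow> 'a list" where
  "lh w = drop (length w div 2) w"

text \<open>Perfect shuffle; only used when length ys = length xs or length xs + 1.\<close>
fun psh :: "'a list \<Rightarrow> 'a list \<Rightarrow> 'a list" where
  "psh [] ys = ys"
| "psh (x # xs) [] = x # xs"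
| "psh (x # xs) (y # ys) = x # y # psh xs ys"

definition bdi :: "'a list \<Rightarrow> 'a list" where
  "bdi w = psh (fh w) (lh w)"

definition bdi_lang :: "'a list set \<Rightarrow> 'a list set" where
  "bdi_lang L = bdi ` L"

end

theory Submission
  imports Defs "HOL-Library.FuncSet"
begin

text \<open>
  Split a word w as u v (even length) or u v b (odd length) with
  |u| = |v|; then bdi w is the perfect shuffle of u and v, followed by b in the
  odd case.  Reading bdi w, a deterministic automaton can therefore advance a
  copy of the given DFA on the letters of u (odd positions), while for the
  letters of v (even positions) it cannot know the state reached after u, so it
  tracks the whole transition map p \<mapsto> \<delta>*(p, v) restricted to the finite state
  set Q.  A third component buffers the last odd-position letter until its
  partner arrives; at the end the buffered letter, if any, is the trailing b.
  The theorem then follows since every word is of the form bdi w.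
\<close>

lemma foldl_closed:
  assumes "\<forall>q\<in>Q. \<forall>a\<in>\<Sigma>. \<delta> q a \<in> Q" "q \<in> Q" "w \<in> lists \<Sigma>"
  shows "foldl \<delta> q w \<in> Q"
  using assms(2,3) by (induction w arbitrary: q) (auto simp: assms(1))

text \<open>A language accepted by a DFA with finitely many states of any type is
  regular: the states are renumbered injectively into an initial segment of
  the naturals.  Final states outside Q are irrelevant since runs stay in Q.\<close>
lemma regular_by_automaton:
  fixes \<Sigma> :: "'a set" and Q :: "'q set" and \<delta> :: "'q \<Rightarrow> 'a \<Rightarrow> 'q"
  assumes fin: "finite \<Sigma>" "finite Q" and q0: "q0 \<in> Q"
    and cl: "\<forall>q\<in>Q. \<forall>a\<in>\<Sigma>. \<delta> q a \<in> Q"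
    and L: "L = {w. w \<in> lists \<Sigma> \<and> foldl \<delta> q0 w \<in> F}"
  shows "regular L"
proof -
  obtain h :: "'q \<Rightarrow> nat" and n where "h ` Q = {i. i < n}" and inj: "inj_on h Q"
    using finite_imp_inj_to_nat_seg[OF fin(2)] by blast
  define \<delta>' where "\<delta>' = (\<lambda>i a. h (\<delta> (inv_into Q h i) a))"
  have inv: "inv_into Q h (h q) = q" if "q \<in> Q" for q
    using inj that by simp
  have run: "foldl \<delta>' (h q) w = h (foldl \<delta> q w)" if "q \<in> Q" "w \<in> lists \<Sigma>" for q w
    using that
  proof (induction w arbitrary: q)
    case (Cons a w)
    then have "\<delta> q a \<in> Q" using cl by auto
    then show ?case using Cons inv by (simp add: \<delta>'_def)
  qed simp
  have accept: "foldl \<delta>' (h q0) w \<in> h ` (F \<inter> Q) \<longleftrightarrow> foldl \<delta> q0 w \<in> F"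
    if "w \<in> lists \<Sigma>" for w
    using run[OF q0 that] foldl_closed[OF cl q0 that] inj
    by (auto simp: inj_on_image_mem_iff)
  have "finite (h ` Q)" "h q0 \<in> h ` Q" "h ` (F \<inter> Q) \<subseteq> h ` Q"
    using fin q0 by auto
  moreover have "\<forall>i\<in>h ` Q. \<forall>a\<in>\<Sigma>. \<delta>' i a \<in> h ` Q"
    using cl inv by (auto simp: \<delta>'_def)
  moreover have "L = {w. w \<in> lists \<Sigma> \<and> foldl \<delta>' (h q0) w \<in> h ` (F \<inter> Q)}"
    using L accept by auto
  ultimately show ?thesis
    unfolding regular_def using fin(1) by blast
qed

lemma set_psh: "set (psh xs ys) = set xs \<union> set ys"
  by (induction xs ys rule: psh.induct) auto

lemma psh_snoc: "length u = length v \<Longrightarrow> psh u (v @ [b]) = psh u v @ [b]"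
  by (induction u v rule: list_induct2) auto

lemma psh_decomposition:
  "\<exists>u v. length u = length v \<and> (z = psh u v \<or> (\<exists>b. z = psh u v @ [b]))"
proof (induction z rule: induct_list012)
  case (3 x y zs)
  then obtain u v where "length u = length v" "zs = psh u v \<or> (\<exists>b. zs = psh u v @ [b])"
    by blast
  then show ?case by (intro exI[of _ "x # u"] exI[of _ "y # v"]) auto
qed (auto intro: exI[of _ "[]"])

lemma bdi_even: "length u = length v \<Longrightarrow> bdi (u @ v) = psh u v"
  by (simp add: bdi_def fh_def lh_def)

lemma bdi_odd: "length u = length v \<Longrightarrow> bdi (u @ v @ [b]) = psh u v @ [b]"
  by (simp add: bdi_def fh_def lh_def psh_snoc)

lemma bdi_cases:
  obtains u v where "length u = length v" "w = u @ v"
  | u v b where "length u = length v" "w = u @ v @ [b]"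
proof (cases "even (length w)")
  case True
  let ?u = "take (length w div 2) w" and ?v = "drop (length w div 2) w"
  have "length ?u = length ?v" using True by auto
  then show ?thesis using that(1)[of ?u ?v] by simp
next
  case False
  let ?u = "take (length w div 2) w" and ?v = "drop (length w div 2) w"
  have "length ?v = length ?u + 1" using False by (auto elim: oddE)
  then obtain v b where vb: "?v = v @ [b]"
    by (metis Suc_eq_plus1 length_Suc_conv_rev)
  then have "length ?u = length v" "w = ?u @ v @ [b]"
    using \<open>length ?v = length ?u + 1\<close> by (simp, metis append_take_drop_id)
  then show ?thesis using that(2) by blast
qed

lemma set_bdi: "set (bdi w) = set w"
  by (cases w rule: bdi_cases) (auto simp: bdi_even bdi_odd set_psh)

lemma bdi_surj: "\<exists>w. bdi w = z"
  using psh_decomposition[of z] bdi_even bdi_odd by metis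

text \<open>A state (q, g, c) records the DFA state q reached on the odd-position
  letters, the map g = (p \<mapsto> \<delta>*(p, v)) on Q for the even-position letters v, and
  the buffered odd-position letter c still waiting for its partner.\<close>
type_synonym ('q, 'a) track_state = "'q \<times> ('q \<Rightarrow> 'q) \<times> 'a option"

definition track_step :: "('q \<Rightarrow> 'a \<Rightarrow> 'q) \<Rightarrow> 'q set \<Rightarrow> ('q, 'a) track_state \<Rightarrow> 'a
    \<Rightarrow> ('q, 'a) track_state" where
  "track_step \<delta> Q s c = (case s of
      (q, g, None) \<Rightarrow> (q, g, Some c)
    | (q, g, Some a) \<Rightarrow> (\<delta> q a, restrict (\<lambda>p. \<delta> (g p) c) Q, None))"

definition track_start :: "'q set \<Rightarrow> 'q \<Rightarrow> ('q, 'a) track_state" where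
  "track_start Q q0 = (q0, restrict id Q, None)"

definition track_final :: "('q \<Rightarrow> 'a \<Rightarrow> 'q) \<Rightarrow> 'q set \<Rightarrow> ('q, 'a) track_state set" where
  "track_final \<delta> F = {s. case s of
      (q, g, None) \<Rightarrow> g q \<in> F
    | (q, g, Some a) \<Rightarrow> \<delta> (g q) a \<in> F}"

definition track_states :: "'q set \<Rightarrow> 'a set \<Rightarrow> ('q, 'a) track_state set" where
  "track_states Q \<Sigma> = Q \<times> (Q \<rightarrow>\<^sub>E Q) \<times> insert None (Some ` \<Sigma>)"

lemma finite_track_states: "finite Q \<Longrightarrow> finite \<Sigma> \<Longrightarrow> finite (track_states Q \<Sigma>)"
  by (simp add: track_states_def finite_PiE)

lemma track_start_in_states: "q0 \<in> Q \<Longrightarrow> track_start Q q0 \<in> track_states Q \<Sigma>"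
  by (auto simp: track_start_def track_states_def)

lemma track_step_closed:
  "\<forall>q\<in>Q. \<forall>a\<in>\<Sigma>. \<delta> q a \<in> Q \<Longrightarrow> \<forall>s\<in>track_states Q \<Sigma>. \<forall>c\<in>\<Sigma>. track_step \<delta> Q s c \<in> track_states Q \<Sigma>"
  by (auto simp: track_states_def track_step_def PiE_def Pi_def)

lemma track_run_psh:
  "length u = length v \<Longrightarrow>
   foldl (track_step \<delta> Q) (q, restrict h Q, None) (psh u v) =
     (foldl \<delta> q u, restrict (\<lambda>p. foldl \<delta> (h p) v) Q, None)"
proof (induction u v arbitrary: q h rule: list_induct2)
  case (Cons x u y v)
  have "restrict (\<lambda>p. \<delta> (restrict h Q p) y) Q = restrict (\<lambda>p. \<delta> (h p) y) Q"
    by (auto simp: restrict_def)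
  then have "track_step \<delta> Q (track_step \<delta> Q (q, restrict h Q, None) x) y
      = (\<delta> q x, restrict (\<lambda>p. \<delta> (h p) y) Q, None)"
    by (simp only: track_step_def prod.case option.case)
  then show ?case using Cons.IH[of "\<delta> q x" "\<lambda>p. \<delta> (h p) y"]
    by (simp only: psh.simps foldl_Cons)
qed simp

lemma track_accepts_bdi:
  assumes cl: "\<forall>q\<in>Q. \<forall>a\<in>\<Sigma>. \<delta> q a \<in> Q" and q0: "q0 \<in> Q" and w: "w \<in> lists \<Sigma>"
  shows "foldl (track_step \<delta> Q) (track_start Q q0) (bdi w) \<in> track_final \<delta> F
    \<longleftrightarrow> foldl \<delta> q0 w \<in> F"
proof -
  have run: "foldl (track_step \<delta> Q) (track_start Q q0) (psh u v)
      = (foldl \<delta> q0 u, restrict (\<lambda>p. foldl \<delta> p v) Q, None)"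
    if "length u = length v" for u v
    using track_run_psh[OF that, of \<delta> Q q0 id] by (simp add: track_start_def)
  show ?thesis
  proof (cases w rule: bdi_cases)
    case (1 u v)
    have "foldl \<delta> q0 u \<in> Q" using foldl_closed[OF cl q0] w 1(2) by simp
    then show ?thesis using run[OF 1(1)] by (simp add: 1(2) bdi_even[OF 1(1)] track_final_def)
  next
    case (2 u v b)
    have "foldl \<delta> q0 u \<in> Q" using foldl_closed[OF cl q0] w 2(2) by simp
    then show ?thesis using run[OF 2(1)]
      by (simp add: 2(2) bdi_odd[OF 2(1)] track_final_def track_step_def)
  qed
qed

text \<open>Hence the two-track automaton recognises the bdi-image of the language;
  surjectivity of bdi provides a preimage of every accepted word.\<close>
lemma bdi_lang_track:
  assumes "\<forall>q\<in>Q. \<forall>a\<in>\<Sigma>. \<delta> q a \<in> Q" "q0 \<in> Q"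
  shows "bdi_lang {w. w \<in> lists \<Sigma> \<and> foldl \<delta> q0 w \<in> F}
    = {z. z \<in> lists \<Sigma> \<and> foldl (track_step \<delta> Q) (track_start Q q0) z \<in> track_final \<delta> F}"
    (is "_ = ?T")
proof
  show "bdi_lang {w. w \<in> lists \<Sigma> \<and> foldl \<delta> q0 w \<in> F} \<subseteq> ?T"
    using track_accepts_bdi[OF assms] by (auto simp: bdi_lang_def in_lists_conv_set set_bdi)
next
  show "?T \<subseteq> bdi_lang {w. w \<in> lists \<Sigma> \<and> foldl \<delta> q0 w \<in> F}"
  proof
    fix z assume z: "z \<in> ?T"
    obtain w where w: "bdi w = z" using bdi_surj by metis
    have wl: "w \<in> lists \<Sigma>" using z w set_bdi[of w] by (auto simp: in_lists_conv_set)
    moreover have "foldl \<delta> q0 w \<in> F" using z w track_accepts_bdi[OF assms wl] by simp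
    ultimately show "z \<in> bdi_lang {w. w \<in> lists \<Sigma> \<and> foldl \<delta> q0 w \<in> F}"
      using w by (auto simp: bdi_lang_def)
  qed
qed

theorem mainTheorem13:
  fixes L :: "'a list set"
  assumes "regular L"
  shows "regular (bdi_lang L)"
proof -
  obtain \<Sigma> :: "'a set" and Q :: "nat set" and \<delta> q0 F where
    fin: "finite \<Sigma>" "finite Q" and q0: "q0 \<in> Q"
    and cl: "\<forall>q\<in>Q. \<forall>a\<in>\<Sigma>. \<delta> q a \<in> Q"
    and L: "L = {w. w \<in> lists \<Sigma> \<and> foldl \<delta> q0 w \<in> F}"
    using assms unfolding regular_def by blast
  show ?thesis
    using regular_by_automaton[OF fin(1) finite_track_states[OF fin(2,1)]
        track_start_in_states[OF q0] track_step_closed[OF cl] bdi_lang_track[OF cl q0]]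
    by (simp add: L)
qed

end
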